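(* There is an absolute constant $C_0$ such that the following holds for every integer $m\ge2$. Let $T$ be the balanced binary tree with $m$ leaves, and suppose that at least a $1/4$ fraction of the nodes of $T$ are marked. If $u$ is chosen uniformly at random among the marked nodes of $T$, then the expected number of nodes in the subtree of $T$ rooted at $u$ is at most $C_0\log m$.
   Context: The balanced binary tree with $m$ leaves is defined as follows: if $m=2^k$, it is the complete binary tree with $2^k$ leaves (all at depth $k$); if $2^k<m<2^{k+1}$, take the complete binary tree with $2^k$ leaves and add a pair of children to each of its $m-2^k$ leftmost leaves. It has $m$ leaves and $m-1$ internal nodes; "nodes" means all nodes (internal and leaves). *)

theory Defs
  imports Complex_Main "HOL-Library.Sublist"
begin

text \<open>Nodes of a binary tree are encoded as root-to-node paths: lists of booleans,
  False = left child, True = right child. The root is [].\<close>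

text \<open>Value of a path read as a binary number, first step most significant;
  so among paths of equal length, smaller value = further left.\<close>
definition path_val :: "bool list \<Rightarrow> nat" where
  "path_val p = foldl (\<lambda>acc b. 2 * acc + (if b then 1 else 0)) 0 p"

definition bt_depth :: "nat \<Rightarrow> nat" where
  "bt_depth m = (GREATEST k. 2 ^ k \<le> m)"

text \<open>Balanced binary tree with m leaves: complete tree of depth k, plus children of the
  (m - 2^k) leftmost depth-k leaves.\<close>
definition bt_nodes :: "nat \<Rightarrow> bool list set" where
  "bt_nodes m = {p. length p \<le> bt_depth m} \<union>
     {p. length p = Suc (bt_depth m) \<and> path_val (take (bt_depth m) p) < m - 2 ^ bt_depth m}"

definition subtree_size :: "nat \<Rightarrow> bool list \<Rightarrow> nat" where
  "subtree_size m u = card {v \<in> bt_nodes m. prefix u v}"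

end

theory Submission
  imports Defs
begin

text \<open>Summing subtree sizes counts every pair (ancestor, descendant), so it equals the sum over
  all nodes of their number of ancestors, which is at most depth + 2 = O(log m). Hence the
  average subtree size over all nodes is O(log m), and restricting to a quarter of the nodes
  increases the average by a factor of at most 4.\<close>

lemma bt_depth_pow_le:
  assumes "m \<ge> 1"
  shows "2 ^ bt_depth m \<le> m"
  unfolding bt_depth_def
proof (rule GreatestI_nat)
  show "2 ^ 0 \<le> m" using assms by simp
  show "k \<le> m" if "2 ^ k \<le> m" for k :: nat
    using less_exp[of k] that by linarith
qed

lemma bt_depth_le_log:
  assumes "m \<ge> 1"
  shows "real (bt_depth m) * ln 2 \<le> ln (real m)"
proof -
  have "(2::real) ^ bt_depth m \<le> real m"
    using bt_depth_pow_le[OF assms] by (metis of_nat_le_iff of_nat_numeral of_nat_power)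
  then have "ln ((2::real) ^ bt_depth m) \<le> ln (real m)"
    using assms by (subst ln_le_cancel_iff) auto
  then show ?thesis
    by (simp add: ln_realpow)
qed

lemma Nil_in_bt_nodes: "[] \<in> bt_nodes m"
  unfolding bt_nodes_def by simp

lemma length_le_bt_nodes: "v \<in> bt_nodes m \<Longrightarrow> length v \<le> Suc (bt_depth m)"
  unfolding bt_nodes_def by auto

lemma finite_bt_nodes: "finite (bt_nodes m)"
proof (rule finite_subset)
  show "bt_nodes m \<subseteq> {p. length p \<le> Suc (bt_depth m)}"
    using length_le_bt_nodes by blast
  show "finite {p :: bool list. length p \<le> Suc (bt_depth m)}"
    using finite_lists_length_le[of "UNIV :: bool set" "Suc (bt_depth m)"] by simp
qed

lemma sum_card_related_swap:
  assumes "finite A"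
  shows "(\<Sum>u\<in>A. card {v\<in>A. R u v}) = (\<Sum>v\<in>A. card {u\<in>A. R u v})"
proof -
  have "(\<Sum>u\<in>A. card {v\<in>A. R u v}) = (\<Sum>u\<in>A. \<Sum>v\<in>A. if R u v then 1 else 0)"
    using assms by (simp add: sum.inter_filter[symmetric])
  also have "\<dots> = (\<Sum>v\<in>A. \<Sum>u\<in>A. if R u v then 1 else 0)"
    by (rule sum.swap)
  also have "\<dots> = (\<Sum>v\<in>A. card {u\<in>A. R u v})"
    using assms by (simp add: sum.inter_filter[symmetric])
  finally show ?thesis .
qed

lemma card_prefixes_le: "card {u\<in>A. prefix u v} \<le> Suc (length v)"
proof -
  have "card {u\<in>A. prefix u v} \<le> card (set (prefixes v))"
    by (rule card_mono) auto
  also have "\<dots> \<le> length (prefixes v)"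
    by (rule card_length)
  finally show ?thesis by simp
qed

lemma sum_subtree_size_le:
  "(\<Sum>u\<in>bt_nodes m. subtree_size m u) \<le> card (bt_nodes m) * (bt_depth m + 2)"
proof -
  have "(\<Sum>u\<in>bt_nodes m. subtree_size m u) = (\<Sum>v\<in>bt_nodes m. card {u\<in>bt_nodes m. prefix u v})"
    unfolding subtree_size_def by (rule sum_card_related_swap[OF finite_bt_nodes])
  also have "\<dots> \<le> (\<Sum>v\<in>bt_nodes m. bt_depth m + 2)"
  proof (rule sum_mono)
    fix v assume "v \<in> bt_nodes m"
    then show "card {u\<in>bt_nodes m. prefix u v} \<le> bt_depth m + 2"
      using card_prefixes_le[of "bt_nodes m" v] length_le_bt_nodes[of v m] by linarith
  qed
  finally show ?thesis by simp
qed

lemma average_le_of_dense_subset: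
  fixes f :: "'a \<Rightarrow> real"
  assumes "finite N" "M \<subseteq> N" "M \<noteq> {}" "card N \<le> c * card M"
    and "\<And>u. u \<in> N \<Longrightarrow> f u \<ge> 0"
  shows "(\<Sum>u\<in>M. f u) / card M \<le> c * ((\<Sum>u\<in>N. f u) / card N)"
proof -
  have M_pos: "real (card M) > 0"
    using assms(1-3) by (simp add: card_gt_0_iff finite_subset)
  have "(\<Sum>u\<in>M. f u) * card N \<le> (\<Sum>u\<in>N. f u) * (c * card M)"
  proof (rule mult_mono)
    show "(\<Sum>u\<in>M. f u) \<le> (\<Sum>u\<in>N. f u)"
      by (rule sum_mono2) (use assms in auto)
    show "real (card N) \<le> real (c * card M)"
      using assms(4) of_nat_le_iff by blast
  qed (use assms(5) in \<open>auto intro: sum_nonneg\<close>)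
  moreover have "card N > 0"
    using assms(1-3) card_gt_0_iff by blast
  ultimately show ?thesis
    using M_pos by (simp add: field_simps)
qed

lemma average_subtree_size_le:
  "(\<Sum>u\<in>bt_nodes m. real (subtree_size m u)) / card (bt_nodes m) \<le> real (bt_depth m) + 2"
proof -
  have "(\<Sum>u\<in>bt_nodes m. real (subtree_size m u)) \<le> card (bt_nodes m) * (real (bt_depth m) + 2)"
    using sum_subtree_size_le[of m] by (metis of_nat_add of_nat_le_iff of_nat_mult of_nat_numeral of_nat_sum)
  moreover have "real (card (bt_nodes m)) > 0"
    using Nil_in_bt_nodes[of m] finite_bt_nodes[of m] card_gt_0_iff by fastforce
  ultimately show ?thesis
    by (simp add: pos_divide_le_eq algebra_simps)
qed

lemma bt_depth_add_two_le_log: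
  assumes "m \<ge> 2"
  shows "real (bt_depth m) + 2 \<le> 3 / ln 2 * ln (real m)"
proof -
  have "ln 2 \<le> ln (real m)"
    using assms by simp
  then have "(real (bt_depth m) + 2) * ln 2 \<le> 3 * ln (real m)"
    using bt_depth_le_log[of m] assms by (simp only: distrib_right) linarith
  then show ?thesis
    by (simp add: pos_le_divide_eq)
qed

theorem lemma24:
  shows "\<exists>C0::real. \<forall>m::nat. m \<ge> 2 \<longrightarrow>
     (\<forall>M. M \<subseteq> bt_nodes m \<and> 4 * card M \<ge> card (bt_nodes m) \<longrightarrow>
        (\<Sum>u\<in>M. real (subtree_size m u)) / real (card M) \<le> C0 * ln (real m))"
proof (intro exI[of _ "12 / ln 2"] allI impI, elim conjE)
  fix m :: nat and M
  assume m: "m \<ge> 2" and M: "M \<subseteq> bt_nodes m" "4 * card M \<ge> card (bt_nodes m)"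
  have "M \<noteq> {}"
    using M(2) card_gt_0_iff finite_bt_nodes Nil_in_bt_nodes by fastforce
  then have "(\<Sum>u\<in>M. real (subtree_size m u)) / card M
      \<le> 4 * ((\<Sum>u\<in>bt_nodes m. real (subtree_size m u)) / card (bt_nodes m))"
    using average_le_of_dense_subset[OF finite_bt_nodes M(1) _ M(2), of "\<lambda>u. real (subtree_size m u)"]
    by simp
  also have "\<dots> \<le> 4 * (3 / ln 2 * ln (real m))"
    using average_subtree_size_le[of m] bt_depth_add_two_le_log[OF m] by linarith
  finally show "(\<Sum>u\<in>M. real (subtree_size m u)) / real (card M) \<le> 12 / ln 2 * ln (real m)"
    by simp
qed

end
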